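(* Let $\bar f=(f_1,\dots,f_n)$, $\bar b=(b_1,\dots,b_m)$ be frame sequences with a distance $d$ satisfying the triangle inequality, such that $d(f_i,f_{i+1})\le\delta$ for $1\le i<n$, $d(b_j,b_{j+1})\le\delta$ for $1\le j<m$, and for every $i$ there is $j$ with $d(f_i,b_j)\le\epsilon$. Suppose $k=\epsilon/\delta$ is an integer with $1\le k\le\min\{n,m\}$. Then Algorithm Near-Linear($k$) returns a matching $\pi$ with cost $C(\pi)=O(\epsilon)$, and runs $k^2$ times faster than the naive $\Theta(mn)$ algorithm, i.e. in time $O(\frac{nm}{k^2})=O(\frac{nm\delta^2}{\epsilon^2})$.
   Context: For $\pi:\{1,\dots,n\}\to\{1,\dots,m\}$, $C(\pi)=\frac1n\sum_{i=1}^n d(f_i,b_{\pi(i)})$. The naive algorithm computes $d(f_i,b_j)$ for all pairs and picks, for each $i$, the minimizing $j$. Algorithm Near-Linear($k$): let $S_i^k=\{i:1\le i\le n,\ i\equiv 0 \bmod k\}\cup\{1\}\cup\{n\}$ and $S_j^k=\{j:1\le j\le m,\ j\equiv0\bmod k\}\cup\{1\}\cup\{m\}$; for $i\in S_i^k$ set $\pi(i)=\arg\min_{j\in S_j^k} d(f_i,b_j)$; for $i\notin S_i^k$ let $near(i)=\arg\min_{t\in S_i^k}|t-i|$ and set $\pi(i)=\pi(near(i))$. Running time counts each evaluation of $d$ as one step. *)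

theory Defs
  imports Complex_Main
begin

definition sample_set :: "nat \<Rightarrow> nat \<Rightarrow> nat set" where
  "sample_set k N = {i. 1 \<le> i \<and> i \<le> N \<and> i mod k = 0} \<union> {1} \<union> {N}"

definition match_cost ::
  "('a \<Rightarrow> 'a \<Rightarrow> real) \<Rightarrow> (nat \<Rightarrow> 'a) \<Rightarrow> (nat \<Rightarrow> 'a) \<Rightarrow> nat \<Rightarrow> (nat \<Rightarrow> nat) \<Rightarrow> real" where
  "match_cost d f b n \<pi> = (1 / real n) * (\<Sum>i = 1..n. d (f i) (b (\<pi> i)))"

text \<open>pi is a possible output of Near-Linear(k) (any tie-breaking in the arg-mins):
  for sampled i, pi(i) is a minimiser of d(f_i, b_j) over sampled j;
  for other i, pi(i) = pi(near(i)) where near(i) is a closest sampled index.\<close>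
definition near_linear_output ::
  "nat \<Rightarrow> ('a \<Rightarrow> 'a \<Rightarrow> real) \<Rightarrow> (nat \<Rightarrow> 'a) \<Rightarrow> nat \<Rightarrow> (nat \<Rightarrow> 'a) \<Rightarrow> nat \<Rightarrow> (nat \<Rightarrow> nat) \<Rightarrow> bool" where
  "near_linear_output k d f n b m \<pi> \<longleftrightarrow>
     (\<forall>i \<in> sample_set k n.
        \<pi> i \<in> sample_set k m \<and> (\<forall>j \<in> sample_set k m. d (f i) (b (\<pi> i)) \<le> d (f i) (b j))) \<and>
     (\<forall>i \<in> {1..n} - sample_set k n.
        (\<exists>t \<in> sample_set k n.
           (\<forall>t' \<in> sample_set k n. \<bar>int t - int i\<bar> \<le> \<bar>int t' - int i\<bar>) \<and> \<pi> i = \<pi> t))"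

text \<open>Running time of Near-Linear(k): number of evaluations of d, namely one per pair
  (i, j) with i in S_i^k and j in S_j^k.\<close>
definition near_linear_evals :: "nat \<Rightarrow> nat \<Rightarrow> nat \<Rightarrow> nat" where
  "near_linear_evals k n m = card (sample_set k n) * card (sample_set k m)"

end

theory Submission
  imports Defs
begin

text \<open>Every index lies less than k steps to the right of a sampled index, so by the triangle
  inequality along the sequence each frame is within \<open>k \<delta> \<le> \<epsilon>\<close> of a sampled frame.
  Hence a sampled \<open>f\<^sub>i\<close> is within \<open>2\<epsilon>\<close> of its sampled minimiser (compare with the sampled
  neighbour of an \<open>\<epsilon>\<close>-close \<open>b\<^sub>j\<close>), and every other \<open>f\<^sub>i\<close> inherits the match of a sampled
  index at distance less than k, costing at most \<open>3\<epsilon>\<close>. Each sample set has at most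
  \<open>N/k + 2 \<le> 3N/k\<close> elements, which bounds the number of distance evaluations.\<close>

lemma sample_set_below_within:
  assumes "1 \<le> k" "1 \<le> j" "j \<le> N"
  shows "\<exists>s\<in>sample_set k N. s \<le> j \<and> j - s < k"
proof (cases "j < k")
  case True
  then show ?thesis using assms by (intro bexI[of _ 1]) (auto simp: sample_set_def)
next
  case False
  define s where "s = j div k * k"
  have "1 \<le> j div k" using div_le_mono[of k j k] False assms by simp
  then have "s \<le> j" "j - s < k" "k \<le> s" "s mod k = 0"
    using assms by (simp_all add: s_def minus_div_mult_eq_mod)
  moreover have "s \<in> sample_set k N"
    using calculation assms by (auto simp: sample_set_def)
  ultimately show ?thesis by blast
qed

lemma card_sample_set_le:
  assumes "1 \<le> k" "k \<le> N"
  shows "real (card (sample_set k N)) \<le> 3 * real N / real k"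
proof -
  have "sample_set k N \<subseteq> (\<lambda>q. q * k) ` {1..N div k} \<union> {1, N}"
  proof
    fix x assume x: "x \<in> sample_set k N"
    show "x \<in> (\<lambda>q. q * k) ` {1..N div k} \<union> {1, N}"
    proof (cases "x = 1 \<or> x = N")
      case False
      then have "1 \<le> x" "x \<le> N" "x mod k = 0" using x by (auto simp: sample_set_def)
      then have "x = x div k * k" "1 \<le> x div k" "x div k \<le> N div k"
        using assms by (auto simp: div_le_mono)
      then show ?thesis by (auto intro: image_eqI)
    qed auto
  qed
  then have "card (sample_set k N) \<le> card ((\<lambda>q. q * k) ` {1..N div k} \<union> {1, N})"
    by (rule card_mono[rotated]) auto
  also have "\<dots> \<le> card ((\<lambda>q. q * k) ` {1..N div k}) + card {1, N}" by (rule card_Un_le)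
  also have "\<dots> \<le> N div k + 2"
  proof -
    have "card {1, N} \<le> 2" by (simp add: card_insert_if)
    then show ?thesis using card_image_le[of "{1..N div k}" "\<lambda>q. q * k"] by simp
  qed
  finally have "real (card (sample_set k N)) \<le> real (N div k) + 2" by linarith
  moreover have "real (N div k) \<le> real N / real k" by (rule of_nat_div_le_of_nat)
  moreover have "2 \<le> 2 * real N / real k" using assms by (simp add: field_simps)
  moreover have "3 * real N / real k = real N / real k + 2 * real N / real k"
    by (simp add: field_simps)
  ultimately show ?thesis by linarith
qed

lemma near_linear_evals_le:
  assumes "1 \<le> k" "k \<le> n" "k \<le> m"
  shows "real (near_linear_evals k n m) \<le> 9 * (real n * real m / (real k)^2)"
proof -
  have "real (near_linear_evals k n m) = real (card (sample_set k n)) * real (card (sample_set k m))"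
    by (simp add: near_linear_evals_def)
  also have "\<dots> \<le> (3 * real n / real k) * (3 * real m / real k)"
    using card_sample_set_le assms by (intro mult_mono) auto
  also have "\<dots> = 9 * (real n * real m / (real k)^2)" by (simp add: power2_eq_square)
  finally show ?thesis .
qed

context
  fixes d :: "'a \<Rightarrow> 'a \<Rightarrow> real" and \<delta> :: real
  assumes triangle: "\<And>x y z. d x z \<le> d x y + d y z"
    and sym: "\<And>x y. d x y = d y x"
    and \<delta>_nonneg: "0 \<le> \<delta>"
begin

lemma dist_le_steps:
  assumes steps: "\<And>i. 1 \<le> i \<Longrightarrow> i < N \<Longrightarrow> d (g i) (g (i + 1)) \<le> \<delta>"
    and "1 \<le> a" "a < b" "b \<le> N"
  shows "d (g a) (g b) \<le> real (b - a) * \<delta>"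
  using assms(3,4)
proof (induction b)
  case (Suc b)
  show ?case
  proof (cases "a = b")
    case True
    then show ?thesis using steps Suc.prems \<open>1 \<le> a\<close> by simp
  next
    case False
    then have "a < b" using Suc.prems by simp
    have "d (g a) (g (Suc b)) \<le> d (g a) (g b) + d (g b) (g (b + 1))" using triangle by simp
    also have "\<dots> \<le> real (b - a) * \<delta> + \<delta>"
      using Suc.IH \<open>a < b\<close> Suc.prems steps \<open>1 \<le> a\<close> by (intro add_mono) auto
    also have "\<dots> = real (Suc b - a) * \<delta>" using \<open>a < b\<close> by (simp add: of_nat_diff algebra_simps)
    finally show ?thesis .
  qed
qed simp

lemma dist_le_index_dist:
  assumes steps: "\<And>i. 1 \<le> i \<Longrightarrow> i < N \<Longrightarrow> d (g i) (g (i + 1)) \<le> \<delta>"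
    and "a \<in> {1..N}" "b \<in> {1..N}" "a \<noteq> b" "\<bar>int a - int b\<bar> \<le> int k"
  shows "d (g a) (g b) \<le> real k * \<delta>"
proof -
  have ordered: "d (g x) (g y) \<le> real k * \<delta>"
    if "x \<in> {1..N}" "y \<in> {1..N}" "x < y" "\<bar>int x - int y\<bar> \<le> int k" for x y
  proof -
    have "d (g x) (g y) \<le> real (y - x) * \<delta>" using dist_le_steps[of N g, OF steps] that by auto
    also have "\<dots> \<le> real k * \<delta>" using that \<delta>_nonneg by (intro mult_right_mono) auto
    finally show ?thesis .
  qed
  show ?thesis
  proof (cases "a < b")
    case False
    then show ?thesis using ordered[of b a] assms sym by (simp add: abs_minus_commute)
  qed (use ordered assms in auto)
qed

context
  fixes f b :: "nat \<Rightarrow> 'a" and n m k :: nat and \<epsilon> :: real and \<pi> :: "nat \<Rightarrow> nat"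
  assumes f_steps: "\<And>i. 1 \<le> i \<Longrightarrow> i < n \<Longrightarrow> d (f i) (f (i + 1)) \<le> \<delta>"
    and b_steps: "\<And>j. 1 \<le> j \<Longrightarrow> j < m \<Longrightarrow> d (b j) (b (j + 1)) \<le> \<delta>"
    and covered: "\<And>i. i \<in> {1..n} \<Longrightarrow> \<exists>j \<in> {1..m}. d (f i) (b j) \<le> \<epsilon>"
    and k_pos: "1 \<le> k" and k_le_n: "k \<le> n"
    and k_steps_le: "real k * \<delta> \<le> \<epsilon>"
    and is_output: "near_linear_output k d f n b m \<pi>"
begin

private lemma eps_nonneg: "0 \<le> \<epsilon>"
  using k_steps_le \<delta>_nonneg by (meson mult_nonneg_nonneg of_nat_0_le_iff order_trans)

lemma near_linear_sampled_dist_le: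
  assumes i: "i \<in> sample_set k n"
  shows "d (f i) (b (\<pi> i)) \<le> 2 * \<epsilon>"
proof -
  have "i \<in> {1..n}" using i k_le_n k_pos by (auto simp: sample_set_def)
  then obtain j where j: "j \<in> {1..m}" "d (f i) (b j) \<le> \<epsilon>" using covered by blast
  obtain s where s: "s \<in> sample_set k m" "s \<le> j" "j - s < k"
    using sample_set_below_within[OF k_pos, of j m] j by auto
  have "d (f i) (b (\<pi> i)) \<le> d (f i) (b s)"
    using is_output i s by (auto simp: near_linear_output_def)
  also have "\<dots> \<le> 2 * \<epsilon>"
  proof (cases "s = j")
    case True
    then show ?thesis using j eps_nonneg by simp
  next
    case False
    have "s \<in> {1..m}" using s j by (auto simp: sample_set_def)
    then have "d (b j) (b s) \<le> real k * \<delta>"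
      using dist_le_index_dist[of m b, OF b_steps, of j s k] j s False by auto
    then have "d (b j) (b s) \<le> \<epsilon>" using k_steps_le by simp
    then show ?thesis using triangle[of "f i" "b s" "b j"] j by simp
  qed
  finally show ?thesis .
qed

lemma near_linear_dist_le:
  assumes i: "i \<in> {1..n}"
  shows "d (f i) (b (\<pi> i)) \<le> 3 * \<epsilon>"
proof (cases "i \<in> sample_set k n")
  case True
  then show ?thesis using near_linear_sampled_dist_le eps_nonneg by fastforce
next
  case False
  obtain t where t: "t \<in> sample_set k n"
      "\<forall>t' \<in> sample_set k n. \<bar>int t - int i\<bar> \<le> \<bar>int t' - int i\<bar>" "\<pi> i = \<pi> t"
    using is_output i False unfolding near_linear_output_def by blast
  obtain s where s: "s \<in> sample_set k n" "s \<le> i" "i - s < k"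
    using sample_set_below_within[OF k_pos, of i n] i by auto
  have "\<bar>int t - int i\<bar> < int k" using t(2) s by fastforce
  moreover have "t \<in> {1..n}" using t k_le_n k_pos by (auto simp: sample_set_def)
  ultimately have "d (f i) (f t) \<le> real k * \<delta>"
    using dist_le_index_dist[of n f, OF f_steps, of i t k] i t(1) False
    by (auto simp: abs_minus_commute)
  then have "d (f i) (f t) \<le> \<epsilon>" using k_steps_le by simp
  then have "d (f i) (b (\<pi> i)) \<le> \<epsilon> + 2 * \<epsilon>"
    using triangle[of "f i" "b (\<pi> t)" "f t"] near_linear_sampled_dist_le[OF t(1)] t(3) by simp
  then show ?thesis by simp
qed

lemma near_linear_match_cost_le: "match_cost d f b n \<pi> \<le> 3 * \<epsilon>"
proof -
  have "(\<Sum>i = 1..n. d (f i) (b (\<pi> i))) \<le> real n * (3 * \<epsilon>)"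
    using sum_mono[of "{1..n}" _ "\<lambda>_. 3 * \<epsilon>"] near_linear_dist_le by simp
  moreover have "0 < real n" using k_pos k_le_n by simp
  ultimately show ?thesis by (simp add: match_cost_def field_simps)
qed

end

end

theorem corollary3p3:
  "\<exists>c::real. \<forall>(d::'a \<Rightarrow> 'a \<Rightarrow> real) (f::nat \<Rightarrow> 'a) (b::nat \<Rightarrow> 'a) n m (k::nat) (\<delta>::real) (\<epsilon>::real) \<pi>.
     (\<forall>x y. 0 \<le> d x y) \<longrightarrow> (\<forall>x y. d x y = d y x) \<longrightarrow>
     (\<forall>x y z. d x z \<le> d x y + d y z) \<longrightarrow>
     0 < \<delta> \<longrightarrow>
     (\<forall>i. 1 \<le> i \<and> i < n \<longrightarrow> d (f i) (f (i + 1)) \<le> \<delta>) \<longrightarrow>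
     (\<forall>j. 1 \<le> j \<and> j < m \<longrightarrow> d (b j) (b (j + 1)) \<le> \<delta>) \<longrightarrow>
     (\<forall>i \<in> {1..n}. \<exists>j \<in> {1..m}. d (f i) (b j) \<le> \<epsilon>) \<longrightarrow>
     real k = \<epsilon> / \<delta> \<longrightarrow> 1 \<le> k \<longrightarrow> k \<le> min n m \<longrightarrow>
     near_linear_output k d f n b m \<pi> \<longrightarrow>
       match_cost d f b n \<pi> \<le> c * \<epsilon> \<and>
       real (near_linear_evals k n m) \<le> c * (real n * real m / (real k)^2) \<and>
       real (near_linear_evals k n m) \<le> c * (real n * real m * \<delta>^2 / \<epsilon>^2)"
proof (intro exI[of _ 9] allI impI)
  fix d :: "'a \<Rightarrow> 'a \<Rightarrow> real" and f b :: "nat \<Rightarrow> 'a" and n m k :: nat and \<delta> \<epsilon> :: real and \<pi>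
  assume sym: "\<forall>x y. d x y = d y x" and triangle: "\<forall>x y z. d x z \<le> d x y + d y z"
    and \<delta>_pos: "0 < \<delta>" and k: "real k = \<epsilon> / \<delta>" "1 \<le> k" "k \<le> min n m"
    and f_steps: "\<forall>i. 1 \<le> i \<and> i < n \<longrightarrow> d (f i) (f (i + 1)) \<le> \<delta>"
    and b_steps: "\<forall>j. 1 \<le> j \<and> j < m \<longrightarrow> d (b j) (b (j + 1)) \<le> \<delta>"
    and covered: "\<forall>i \<in> {1..n}. \<exists>j \<in> {1..m}. d (f i) (b j) \<le> \<epsilon>"
    and is_output: "near_linear_output k d f n b m \<pi>"
  have \<epsilon>: "\<epsilon> = real k * \<delta>" using k \<delta>_pos by (simp add: field_simps)
  have "match_cost d f b n \<pi> \<le> 3 * \<epsilon>"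
    by (rule near_linear_match_cost_le[where d = d and \<delta> = \<delta> and f = f and b = b and
          n = n and m = m and k = k and \<epsilon> = \<epsilon> and \<pi> = \<pi>])
      (use triangle sym \<delta>_pos \<epsilon> k f_steps b_steps covered is_output in auto)
  moreover have "0 \<le> \<epsilon>" using \<epsilon> \<delta>_pos by simp
  moreover have "real (near_linear_evals k n m) \<le> 9 * (real n * real m / (real k)^2)"
    using near_linear_evals_le k(2,3) by simp
  moreover have "real n * real m / (real k)^2 = real n * real m * \<delta>^2 / \<epsilon>^2"
    using \<epsilon> \<delta>_pos by (simp add: power_mult_distrib)
  ultimately show "match_cost d f b n \<pi> \<le> 9 * \<epsilon> \<and>
      real (near_linear_evals k n m) \<le> 9 * (real n * real m / (real k)^2) \<and>
      real (near_linear_evals k n m) \<le> 9 * (real n * real m * \<delta>^2 / \<epsilon>^2)" by simp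
qed

end
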